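(* Let $q$ be a prime power and let $n,k,r,x$ be integers with $0\le x\le r\le \min(n,k)$. Let $\mathbf{M}$ be a random $n\times k$ matrix over $\mathbb{F}_q$ whose entries are independent and uniformly distributed on $\mathbb{F}_q$, conditioned on the event $\mathrm{rank}(\mathbf{M})=r$. Let $X=\{i\in\{1,\dots,k\}:\mathbf{e}_i\in\mathrm{Row}(\mathbf{M})\}$. Then $$P(|X|=x \mid R=r,\,N=n)=\frac{\binom{k}{x}}{\binom{k}{r}_q}\sum_{j=0}^{k-x}(-1)^j\binom{k-x}{j}\binom{k-x-j}{r-x-j}_q .$$
   Context: $\mathbf{e}_i$ denotes the $i$-th standard unit vector of $\mathbb{F}_q^k$, and $\mathrm{Row}(\mathbf{M})$ is the row space of $\mathbf{M}$. $R$ denotes the rank of $\mathbf{M}$ and $N$ its number of rows. $\binom{m}{d}$ is the ordinary binomial coefficient. $\binom{m}{d}_q$ is the Gaussian binomial coefficient, i.e. the number of $d$-dimensional subspaces of an $m$-dimensional vector space over $\mathbb{F}_q$, $\binom{m}{d}_q=\prod_{i=0}^{d-1}\frac{q^{m}-q^{i}}{q^{d}-q^{i}}$ for $0\le d\le m$. By convention $\binom{m}{d}_q=0$ if $d<0$ or $d>m$. *)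

theory Defs
  imports "HOL-Analysis.Analysis" "HOL-Probability.Probability"
begin

definition gauss_binom :: "nat \<Rightarrow> int \<Rightarrow> int \<Rightarrow> real" where
  "gauss_binom q m d =
     (if 0 \<le> d \<and> d \<le> m
      then (\<Prod>i<nat d. (real q ^ nat m - real q ^ i) / (real q ^ nat d - real q ^ i))
      else 0)"

end

theory Submission
  imports Defs
begin

text \<open>
  The row space of a uniformly random matrix of rank r is uniformly distributed over the
  r-dimensional subspaces of \<open>\<bbbF>\<^sub>q\<^sup>k\<close>: any two such subspaces are related by an injective linear map,
  which acting on rows matches up the matrices having them as row spaces. The set X only depends on
  the row space, so the probability is a ratio of subspace counts. Subspaces of dimension r that
  contain the coordinate vectors indexed by a set T are counted by the Gaussian binomial
  \<open>[k - |T| choose r - |T|]\<^sub>q\<close>, by counting ordered extensions of a basis in two ways. Moebius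
  inversion on the Boolean lattice of index sets turns these counts of subspaces with \<open>X \<supseteq> T\<close> into
  counts with \<open>X = S\<close>, and there are \<open>k choose x\<close> sets S of size x.
\<close>

lemma card_span_independent:
  fixes B :: "('a::{finite,field}^'k) set"
  assumes "vec.independent B"
  shows "card (vec.span B) = CARD('a) ^ card B"
proof -
  have fB: "finite B" using assms vec.independent_explicit by blast
  define \<phi> where "\<phi> = (\<lambda>u::('a^'k) \<Rightarrow> 'a. \<Sum>v\<in>B. u v *s v)"
  have "bij_betw \<phi> (B \<rightarrow>\<^sub>E UNIV) (vec.span B)"
  proof (rule bij_betwI')
    fix u w :: "'a^'k \<Rightarrow> 'a" assume u: "u \<in> B \<rightarrow>\<^sub>E UNIV" and w: "w \<in> B \<rightarrow>\<^sub>E UNIV"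
    show "(\<phi> u = \<phi> w) = (u = w)"
    proof
      assume "\<phi> u = \<phi> w"
      then have "(\<Sum>v\<in>B. (u v - w v) *s v) = 0"
        by (simp add: \<phi>_def vector_sub_rdistrib sum_subtractf)
      with assms have "\<forall>v\<in>B. u v - w v = 0"
        unfolding vec.independent_explicit by (elim conjE allE[of _ "\<lambda>v. u v - w v"]) simp
      then show "u = w" using u w by (auto simp: PiE_def extensional_def fun_eq_iff)
    qed simp
  next
    fix u :: "'a^'k \<Rightarrow> 'a"
    show "\<phi> u \<in> vec.span B" unfolding \<phi>_def by (simp add: vec.span_finite[OF fB])
  next
    fix y assume "y \<in> vec.span B"
    then obtain u where "y = (\<Sum>v\<in>B. u v *s v)" using vec.span_finite[OF fB] by auto
    then show "\<exists>x\<in>B \<rightarrow>\<^sub>E UNIV. y = \<phi> x"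
      by (intro bexI[of _ "restrict u B"]) (auto simp: \<phi>_def intro!: sum.cong)
  qed
  then have "card (vec.span B) = card (B \<rightarrow>\<^sub>E (UNIV::'a set))" by (simp add: bij_betw_same_card)
  also have "\<dots> = CARD('a) ^ card B" using fB by (simp add: card_PiE prod_constant)
  finally show ?thesis .
qed

lemma card_subspace:
  fixes S :: "('a::{finite,field}^'k) set"
  assumes "vec.subspace S"
  shows "card S = CARD('a) ^ vec.dim S"
proof -
  obtain B where B: "B \<subseteq> S" "vec.independent B" "S \<subseteq> vec.span B" "card B = vec.dim S"
    using vec.basis_exists by blast
  have "vec.span B = S" using B assms vec.span_minimal by blast
  then show ?thesis using card_span_independent[OF B(2)] B(4) by simp
qed

lemma dim_Un_set_le:
  fixes W :: "('a::field^'k) set"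
  shows "vec.dim (W \<union> set xs) \<le> vec.dim W + length xs"
proof (induction xs)
  case Nil then show ?case by simp
next
  case (Cons a xs)
  have "W \<union> set (a # xs) = insert a (W \<union> set xs)" by auto
  then show ?case using Cons by (simp add: vec.dim_insert)
qed

definition independent_extensions :: "('a::field^'k) set \<Rightarrow> ('a^'k) set \<Rightarrow> nat \<Rightarrow> ('a^'k) list set"
  where "independent_extensions W A s =
    {xs. length xs = s \<and> set xs \<subseteq> A \<and> vec.dim (W \<union> set xs) = vec.dim W + s}"

lemma independent_extensions_Suc:
  fixes W A :: "('a::field^'k) set"
  shows "independent_extensions W A (Suc s) =
    (\<lambda>(xs, v). v # xs) ` (SIGMA xs:independent_extensions W A s. A - vec.span (W \<union> set xs))"
proof (intro equalityI subsetI)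
  fix L assume L: "L \<in> independent_extensions W A (Suc s)"
  then obtain v xs where Lv: "L = v # xs" and len: "length xs = s"
    by (cases L) (auto simp: independent_extensions_def)
  have d: "vec.dim (insert v (W \<union> set xs)) = vec.dim W + Suc s"
    using L Lv by (simp add: independent_extensions_def)
  have "v \<notin> vec.span (W \<union> set xs)"
    using d dim_Un_set_le[of W xs] len by (auto simp: vec.dim_insert)
  moreover from this have "xs \<in> independent_extensions W A s" "v \<in> A"
    using d L Lv len by (auto simp: independent_extensions_def vec.dim_insert)
  ultimately show "L \<in> (\<lambda>(xs, v). v # xs) ` (SIGMA xs:independent_extensions W A s. A - vec.span (W \<union> set xs))"
    using Lv by force
next
  fix L assume "L \<in> (\<lambda>(xs, v). v # xs) ` (SIGMA xs:independent_extensions W A s. A - vec.span (W \<union> set xs))"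
  then obtain v xs where "L = v # xs" "xs \<in> independent_extensions W A s"
    "v \<in> A" "v \<notin> vec.span (W \<union> set xs)"
    by auto
  then show "L \<in> independent_extensions W A (Suc s)"
    by (auto simp: independent_extensions_def vec.dim_insert)
qed

lemma finite_independent_extensions:
  "finite (independent_extensions (W :: ('a::{finite,field}^'k) set) A s)"
  by (rule finite_subset[OF _ finite_lists_length_eq[of UNIV s]])
     (auto simp: independent_extensions_def)

lemma card_independent_extensions:
  fixes W A :: "('a::{finite,field}^'k) set"
  assumes W: "vec.subspace W" and A: "vec.subspace A" and "W \<subseteq> A"
    and "vec.dim W + s \<le> vec.dim A"
  shows "card (independent_extensions W A s) = (\<Prod>i<s. CARD('a)^vec.dim A - CARD('a)^(vec.dim W + i))"
  using \<open>vec.dim W + s \<le> vec.dim A\<close>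
proof (induction s)
  case 0
  have "independent_extensions W A 0 = {[]}" by (auto simp: independent_extensions_def)
  then show ?case by simp
next
  case (Suc s)
  let ?q = "CARD('a)"
  have complement: "card (A - vec.span (W \<union> set xs)) = ?q^vec.dim A - ?q^(vec.dim W + s)"
    if xs: "xs \<in> independent_extensions W A s" for xs
  proof -
    have "vec.span (W \<union> set xs) \<subseteq> A"
      using xs \<open>W \<subseteq> A\<close> by (intro vec.span_minimal[OF _ A]) (auto simp: independent_extensions_def)
    then have "card (A - vec.span (W \<union> set xs)) = card A - card (vec.span (W \<union> set xs))"
      by (intro card_Diff_subset) simp
    then show ?thesis
      using xs by (simp add: card_subspace[OF A] card_subspace[OF vec.subspace_span]
          independent_extensions_def)
  qed
  have "card (independent_extensions W A (Suc s))
      = card (SIGMA xs:independent_extensions W A s. A - vec.span (W \<union> set xs))"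
    unfolding independent_extensions_Suc by (rule card_image) (auto simp: inj_on_def)
  also have "\<dots> = (\<Sum>xs\<in>independent_extensions W A s. card (A - vec.span (W \<union> set xs)))"
    by (rule card_SigmaI[OF finite_independent_extensions]) simp
  also have "\<dots> = card (independent_extensions W A s) * (?q^vec.dim A - ?q^(vec.dim W + s))"
    using complement by simp
  finally show ?case using Suc by (simp add: mult.commute)
qed

lemma card_eq_card_mult_const_fibres:
  assumes "finite E" "finite T" "f ` E \<subseteq> T" "\<And>U. U \<in> T \<Longrightarrow> card {x\<in>E. f x = U} = c"
  shows "card E = card T * c"
proof -
  have "card E = (\<Sum>x\<in>E. 1)" by simp
  also have "\<dots> = (\<Sum>U\<in>T. \<Sum>x\<in>{x\<in>E. f x = U}. 1)"
    by (rule sum.group[OF assms(1-3), symmetric])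
  also have "\<dots> = card T * c" using assms(4) by simp
  finally show ?thesis .
qed

definition subspaces_containing :: "('a::field^'k) set \<Rightarrow> nat \<Rightarrow> ('a^'k) set set"
  where "subspaces_containing W d = {U. vec.subspace U \<and> W \<subseteq> U \<and> vec.dim U = d}"

lemma card_independent_extensions_UNIV:
  fixes W :: "('a::{finite,field}^'k) set"
  assumes W: "vec.subspace W"
  shows "card (independent_extensions W UNIV s) = card (subspaces_containing W (vec.dim W + s))
           * (\<Prod>i<s. CARD('a)^(vec.dim W + s) - CARD('a)^(vec.dim W + i))"
proof (rule card_eq_card_mult_const_fibres[where f = "\<lambda>xs. vec.span (W \<union> set xs)"])
  show "(\<lambda>xs. vec.span (W \<union> set xs)) ` independent_extensions W UNIV s
        \<subseteq> subspaces_containing W (vec.dim W + s)"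
    using vec.span_superset by (fastforce simp: independent_extensions_def subspaces_containing_def)
  fix U assume "U \<in> subspaces_containing W (vec.dim W + s)"
  then have U: "vec.subspace U" "W \<subseteq> U" "vec.dim U = vec.dim W + s"
    by (auto simp: subspaces_containing_def)
  have "{xs \<in> independent_extensions W UNIV s. vec.span (W \<union> set xs) = U} = independent_extensions W U s"
  proof (intro equalityI subsetI)
    fix xs assume "xs \<in> {xs \<in> independent_extensions W UNIV s. vec.span (W \<union> set xs) = U}"
    then show "xs \<in> independent_extensions W U s"
      using vec.span_superset[of "W \<union> set xs"] by (auto simp: independent_extensions_def)
  next
    fix xs assume xs: "xs \<in> independent_extensions W U s"
    then have "vec.span (W \<union> set xs) \<subseteq> U"
      using U by (intro vec.span_minimal) (auto simp: independent_extensions_def)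
    then have "vec.span (W \<union> set xs) = U"
      using xs U by (intro vec.subspace_dim_equal) (auto simp: independent_extensions_def)
    then show "xs \<in> {xs \<in> independent_extensions W UNIV s. vec.span (W \<union> set xs) = U}"
      using xs by (auto simp: independent_extensions_def)
  qed
  then show "card {xs \<in> independent_extensions W UNIV s. vec.span (W \<union> set xs) = U}
      = (\<Prod>i<s. CARD('a)^(vec.dim W + s) - CARD('a)^(vec.dim W + i))"
    using card_independent_extensions[OF W U(1,2)] U(3) by simp
qed (simp_all add: finite_independent_extensions)

lemma CARD_field_ge_2: "CARD('a::{finite,field}) \<ge> 2"
proof -
  have "card {0::'a, 1} \<le> CARD('a)" by (rule card_mono) auto
  then show ?thesis by simp
qed

lemma of_nat_power_diff_factor:
  assumes "q > 0" "t + i \<le> m"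
  shows "real (q^m - q^(t + i)) = real q^t * (real q^(m - t) - real q^i)"
proof -
  have "q^(t + i) \<le> q^m" using assms by (intro power_increasing) auto
  then have "real (q^m - q^(t + i)) = real q^m - real q^(t + i)" by (simp add: of_nat_diff)
  also have "\<dots> = real q^t * (real q^(m - t) - real q^i)"
    using assms(2) by (simp add: algebra_simps power_add[symmetric])
  finally show ?thesis .
qed

lemma gauss_binom_eq_if_mult_prod:
  fixes q c :: nat
  assumes "q \<ge> 2" "t + s \<le> m"
    and mult: "c * (\<Prod>i<s. q^(t + s) - q^(t + i)) = (\<Prod>i<s. q^m - q^(t + i))"
  shows "real c = gauss_binom q (int m - int t) (int s)"
proof -
  have factor: "real (q^n - q^(t + i)) = real q^t * (real q^(n - t) - real q^i)"
    if "t + i \<le> n" for n i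
    using of_nat_power_diff_factor[OF _ that] assms(1) by simp
  have "real (\<Prod>i<s. q^(t + s) - q^(t + i)) = (\<Prod>i<s. real q^t * (real q^s - real q^i))"
    unfolding of_nat_prod by (intro prod.cong refl) (simp add: factor)
  moreover have "real (\<Prod>i<s. q^m - q^(t + i)) = (\<Prod>i<s. real q^t * (real q^(m - t) - real q^i))"
    unfolding of_nat_prod using assms(2) by (intro prod.cong refl factor) auto
  ultimately have double_count: "real c * (\<Prod>i<s. real q^t * (real q^s - real q^i))
      = (\<Prod>i<s. real q^t * (real q^(m - t) - real q^i))"
    by (metis mult of_nat_mult)
  have "(\<Prod>i<s. real q^t * (real q^s - real q^i)) \<noteq> 0"
    using assms(1) power_strict_increasing[of _ s "real q"] by simp
  then have "real c = (\<Prod>i<s. real q^t * (real q^(m - t) - real q^i))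
      / (\<Prod>i<s. real q^t * (real q^s - real q^i))"
    using double_count by (metis nonzero_mult_div_cancel_right)
  also have "\<dots> = (\<Prod>i<s. (real q^(m - t) - real q^i) / (real q^s - real q^i))"
    using assms(1) by (simp add: prod_dividef[symmetric])
  finally show ?thesis
    using assms(2) by (simp add: gauss_binom_def nat_diff_distrib)
qed

lemma card_subspaces_containing:
  fixes W :: "('a::{finite,field}^'k) set"
  assumes W: "vec.subspace W" and "vec.dim W \<le> r" "r \<le> CARD('k)"
  shows "real (card (subspaces_containing W r))
         = gauss_binom CARD('a) (int CARD('k) - int (vec.dim W)) (int r - int (vec.dim W))"
proof -
  define s where "s = r - vec.dim W"
  have r: "r = vec.dim W + s" using assms by (simp add: s_def)
  \<comment> \<open>count ordered extensions of a basis of W by s vectors in two ways\<close>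
  have "card (subspaces_containing W r) * (\<Prod>i<s. CARD('a)^r - CARD('a)^(vec.dim W + i))
      = (\<Prod>i<s. CARD('a)^CARD('k) - CARD('a)^(vec.dim W + i))"
    using card_independent_extensions_UNIV[OF W, of s]
      card_independent_extensions[OF W vec.subspace_UNIV subset_UNIV, of s] assms r
    by (simp add: card_cart_basis)
  then show ?thesis
    using gauss_binom_eq_if_mult_prod[OF CARD_field_ge_2] assms r by simp
qed

lemma dim_axes:
  "vec.dim ((\<lambda>i. axis i (1::'a::field)) ` (T :: 'k::finite set)) = card T"
proof -
  have "vec.independent ((\<lambda>i. axis i (1::'a)) ` T)"
    by (rule vec.independent_mono[OF independent_cart_basis]) (auto simp: cart_basis_def)
  moreover have "card ((\<lambda>i. axis i (1::'a)) ` T) = card T"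
    by (rule card_image) (auto simp: inj_on_def axis_eq_axis)
  ultimately show ?thesis by (simp add: vec.dim_eq_card_independent)
qed

lemma axes_subset_iff_span_subset:
  fixes U :: "('a::field^'k::finite) set"
  assumes "vec.subspace U"
  shows "T \<subseteq> {i. axis i 1 \<in> U} \<longleftrightarrow> vec.span ((\<lambda>i. axis i 1) ` T) \<subseteq> U"
proof
  assume "T \<subseteq> {i. axis i 1 \<in> U}"
  then show "vec.span ((\<lambda>i. axis i 1) ` T) \<subseteq> U" by (intro vec.span_minimal[OF _ assms]) auto
qed (use vec.span_superset in blast)

lemma card_subspaces_containing_axes:
  assumes "r \<le> CARD('k::finite)"
  shows "real (card {U :: ('a::{finite,field}^'k) set.
                       vec.subspace U \<and> vec.dim U = r \<and> T \<subseteq> {i. axis i 1 \<in> U}})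
         = gauss_binom CARD('a) (int CARD('k) - int (card T)) (int r - int (card T))"
proof (cases "card T \<le> r")
  case True
  let ?W = "vec.span ((\<lambda>i. axis i (1::'a)) ` T)"
  have "{U. vec.subspace U \<and> vec.dim U = r \<and> T \<subseteq> {i. axis i 1 \<in> U}} = subspaces_containing ?W r"
    unfolding subspaces_containing_def
  proof (intro Collect_cong)
    fix U :: "('a^'k) set"
    show "(vec.subspace U \<and> vec.dim U = r \<and> T \<subseteq> {i. axis i 1 \<in> U}) = (vec.subspace U \<and> ?W \<subseteq> U \<and> vec.dim U = r)"
      using axes_subset_iff_span_subset[of U T] by blast
  qed
  then show ?thesis
    using card_subspaces_containing[where 'a='a and 'k='k, OF vec.subspace_span, of _ r] True assms
    by (simp add: dim_axes)
next
  case False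
  have "card T \<le> vec.dim U" if "vec.subspace U" "T \<subseteq> {i. axis i (1::'a) \<in> U}" for U
    using vec.dim_subset[of "vec.span ((\<lambda>i. axis i (1::'a)) ` T)" U] that
    by (simp add: axes_subset_iff_span_subset dim_axes)
  then have "{U :: ('a^'k) set. vec.subspace U \<and> vec.dim U = r \<and> T \<subseteq> {i. axis i 1 \<in> U}} = {}"
    using False by fastforce
  then show ?thesis using False by (simp add: gauss_binom_def)
qed

lemma ex_subspace_dim:
  assumes "r \<le> CARD('k::finite)"
  obtains U :: "('a::field^'k) set" where "vec.subspace U" "vec.dim U = r"
proof -
  obtain J :: "'k set" where "card J = r" using assms by (metis obtain_subset_with_card_n)
  then show ?thesis
    using that[of "vec.span ((\<lambda>i. axis i 1) ` J)"] by (simp add: dim_axes)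
qed

lemma sum_Pow_by_card:
  fixes h :: "nat \<Rightarrow> 'b::comm_semiring_1"
  assumes "finite A"
  shows "(\<Sum>D\<in>Pow A. h (card D)) = (\<Sum>j=0..card A. of_nat (card A choose j) * h j)"
proof -
  have "(\<Sum>D\<in>Pow A. h (card D)) = (\<Sum>j=0..card A. \<Sum>D\<in>{D \<in> Pow A. card D = j}. h (card D))"
    by (rule sum.group[symmetric]) (use assms in \<open>auto intro: card_mono\<close>)
  also have "\<dots> = (\<Sum>j=0..card A. of_nat (card A choose j) * h j)"
  proof (rule sum.cong[OF refl])
    fix j
    have "(\<Sum>D\<in>{D \<in> Pow A. card D = j}. h (card D)) = (\<Sum>D\<in>{D. D \<subseteq> A \<and> card D = j}. h j)"
      by (rule sum.cong) auto
    then show "(\<Sum>D\<in>{D \<in> Pow A. card D = j}. h (card D)) = of_nat (card A choose j) * h j"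
      using n_subsets[OF assms, of j] by simp
  qed
  finally show ?thesis .
qed

lemma sum_supersets_eq_sum_Pow:
  assumes "S \<subseteq> Y"
  shows "(\<Sum>T\<in>{T. S \<subseteq> T \<and> T \<subseteq> Y}. f T) = (\<Sum>D\<in>Pow (Y - S). f (S \<union> D))"
  by (rule sum.reindex_bij_witness[of _ "\<lambda>D. S \<union> D" "\<lambda>T. T - S"])
     (use assms in \<open>auto simp: Un_absorb1\<close>)

lemma sum_Pow_alternating:
  assumes "finite A"
  shows "(\<Sum>D\<in>Pow A. (-1::'b::comm_ring_1)^card D) = (if A = {} then 1 else 0)"
proof (cases "A = {}")
  case False
  then have "card A > 0" using assms by auto
  have "(\<Sum>D\<in>Pow A. (-1::'b)^card D) = (\<Sum>j\<le>card A. (-1)^j * of_nat (card A choose j))"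
    using sum_Pow_by_card[OF assms, of "\<lambda>j. (-1)^j"] by (simp add: atLeast0AtMost mult.commute)
  also have "\<dots> = 0" using choose_alternating_sum[OF \<open>card A > 0\<close>] by simp
  finally show ?thesis using False by simp
qed simp

lemma card_Un_Pow_Diff:
  fixes S :: "'k::finite set"
  assumes "D \<in> Pow (Y - S)"
  shows "card (S \<union> D) = card S + card D"
  using assms by (subst card_Un_disjoint) auto

lemma sum_supersets_alternating_indicator:
  fixes S Y :: "'k::finite set"
  shows "(\<Sum>T | S \<subseteq> T. (-1::real)^(card T - card S) * (if T \<subseteq> Y then 1 else 0))
         = (if Y = S then 1 else 0)"
proof -
  have "(\<Sum>T | S \<subseteq> T. (-1::real)^(card T - card S) * (if T \<subseteq> Y then 1 else 0))
      = (\<Sum>T\<in>{T. S \<subseteq> T \<and> T \<subseteq> Y}. (-1)^(card T - card S))"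
    by (rule sum.mono_neutral_cong_right) auto
  also have "\<dots> = (if Y = S then 1 else 0)"
  proof (cases "S \<subseteq> Y")
    case True
    then have "(\<Sum>T\<in>{T. S \<subseteq> T \<and> T \<subseteq> Y}. (-1::real)^(card T - card S))
        = (\<Sum>D\<in>Pow (Y - S). (-1)^card D)"
      unfolding sum_supersets_eq_sum_Pow[OF True] by (intro sum.cong refl) (simp add: card_Un_Pow_Diff)
    then show ?thesis using True sum_Pow_alternating[of "Y - S"] by auto
  next
    case False
    then have "{T. S \<subseteq> T \<and> T \<subseteq> Y} = {}" "Y \<noteq> S" by auto
    then show ?thesis by (simp only: sum.empty if_False)
  qed
  finally show ?thesis .
qed

lemma card_fibre_eq_alternating_sum:
  fixes X :: "'u \<Rightarrow> 'k::finite set"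
  assumes "finite F"
  shows "real (card {U\<in>F. X U = S})
         = (\<Sum>T | S \<subseteq> T. (-1)^(card T - card S) * real (card {U\<in>F. T \<subseteq> X U}))"
proof -
  have "real (card {U\<in>F. X U = S}) = (\<Sum>U\<in>F. if X U = S then 1 else 0)"
    using assms by (simp add: sum.If_cases Collect_conj_eq Int_commute)
  also have "\<dots> = (\<Sum>U\<in>F. \<Sum>T | S \<subseteq> T. (-1)^(card T - card S) * (if T \<subseteq> X U then 1 else 0))"
    by (simp add: sum_supersets_alternating_indicator)
  also have "\<dots> = (\<Sum>T | S \<subseteq> T. (-1)^(card T - card S) * (\<Sum>U\<in>F. if T \<subseteq> X U then 1 else 0))"
    by (subst sum.swap) (simp add: sum_distrib_left)
  also have "\<dots> = (\<Sum>T | S \<subseteq> T. (-1)^(card T - card S) * real (card {U\<in>F. T \<subseteq> X U}))"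
    using assms by (simp add: sum.If_cases Collect_conj_eq Int_commute)
  finally show ?thesis .
qed

lemma sum_supersets_by_card:
  fixes S :: "'k::finite set" and G :: "nat \<Rightarrow> real"
  assumes "card S = x"
  shows "(\<Sum>T | S \<subseteq> T. (-1)^(card T - card S) * G (card T))
         = (\<Sum>j=0..CARD('k)-x. (-1)^j * real ((CARD('k)-x) choose j) * G (x+j))"
proof -
  have "(\<Sum>T | S \<subseteq> T. (-1)^(card T - card S) * G (card T))
      = (\<Sum>D\<in>Pow (UNIV - S). (-1)^card D * G (x + card D))"
    using sum_supersets_eq_sum_Pow[of S UNIV "\<lambda>T. (-1)^(card T - card S) * G (card T)"] assms
    by (simp add: card_Un_Pow_Diff[of _ UNIV S] cong: sum.cong del: Pow_iff)
  also have "\<dots> = (\<Sum>j=0..CARD('k)-x. real ((CARD('k)-x) choose j) * ((-1)^j * G (x+j)))"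
    using sum_Pow_by_card[of "UNIV - S" "\<lambda>j. (-1)^j * G (x+j)"] assms
    by (simp add: card_Diff_subset)
  finally show ?thesis by (simp add: algebra_simps)
qed

lemma card_by_inclusion_exclusion:
  fixes X :: "'u \<Rightarrow> 'k::finite set" and G :: "nat \<Rightarrow> real"
  assumes "finite F" and G: "\<And>T. real (card {U\<in>F. T \<subseteq> X U}) = G (card T)"
  shows "real (card {U\<in>F. card (X U) = x}) =
     real (CARD('k) choose x) * (\<Sum>j=0..CARD('k)-x. (-1)^j * real ((CARD('k)-x) choose j) * G (x+j))"
proof -
  have "{U\<in>F. card (X U) = x} = (\<Union>S\<in>{S. card S = x}. {U\<in>F. X U = S})" by auto
  then have "card {U\<in>F. card (X U) = x} = (\<Sum>S | card S = x. card {U\<in>F. X U = S})"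
    using assms by (simp only:) (rule card_UN_disjoint, auto)
  then have "real (card {U\<in>F. card (X U) = x}) = (\<Sum>S | card S = x. real (card {U\<in>F. X U = S}))"
    by simp
  also have "\<dots> = (\<Sum>S | card (S::'k set) = x. \<Sum>j=0..CARD('k)-x. (-1)^j * real ((CARD('k)-x) choose j) * G (x+j))"
  proof (rule sum.cong[OF refl])
    fix S :: "'k set" assume "S \<in> {S. card S = x}"
    then show "real (card {U\<in>F. X U = S})
        = (\<Sum>j=0..CARD('k)-x. (-1)^j * real ((CARD('k)-x) choose j) * G (x+j))"
      using sum_supersets_by_card[of S x G] by (simp add: card_fibre_eq_alternating_sum[OF assms(1)] G)
  qed
  also have "\<dots> = real (CARD('k) choose x) * (\<Sum>j=0..CARD('k)-x. (-1)^j * real ((CARD('k)-x) choose j) * G (x+j))"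
    using n_subsets[of "UNIV::'k set" x] by simp
  finally show ?thesis .
qed

lemma linear_inj_image_subspace_eq:
  fixes U U' :: "('a::field^'k) set"
  assumes U: "vec.subspace U" and U': "vec.subspace U'" and "vec.dim U = vec.dim U'"
  obtains g where "Vector_Spaces.linear (*s) (*s) g" "inj g" "g ` U = U'"
proof -
  obtain B where B: "B \<subseteq> U" "vec.independent B" "U \<subseteq> vec.span B" "card B = vec.dim U"
    using vec.basis_exists by blast
  obtain C where C: "C \<subseteq> U'" "vec.independent C" "U' \<subseteq> vec.span C" "card C = vec.dim U'"
    using vec.basis_exists by blast
  have "finite B" "finite C" using B C vec.independent_explicit by blast+
  then obtain h where h: "bij_betw h B C"
    using B(4) C(4) \<open>vec.dim U = vec.dim U'\<close> by (metis finite_same_card_bij)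
  obtain g where g: "Vector_Spaces.linear (*s) (*s) g" "inj g" "\<forall>x\<in>B. g x = h x"
    using vec.linear_independent_extend_inj[OF B(2), of h] h C(2) by (auto simp: bij_betw_def)
  have "g ` B = C" using g(3) h by (auto simp: bij_betw_def image_def)
  moreover have "vec.span B = U" "vec.span C = U'"
    using B C U U' vec.span_minimal by blast+
  ultimately have "g ` U = U'" using vec.linear_span_image[OF g(1), of B] by simp
  then show ?thesis using g that by blast
qed

lemma rows_eq_range: "rows (M::'a^'k^'n) = range (\<lambda>i. M $ i)"
  by (auto simp: rows_def row_def vec_nth_inverse)

lemma card_matrices_row_space_le:
  fixes U U' :: "('a::{field,finite}^'k) set"
  assumes "vec.subspace U" "vec.subspace U'" "vec.dim U = vec.dim U'"
  shows "card {M::'a^'k^'n. vec.span (rows M) = U} \<le> card {M::'a^'k^'n. vec.span (rows M) = U'}"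
proof -
  obtain g where g: "Vector_Spaces.linear (*s) (*s) g" "inj g" "g ` U = U'"
    using linear_inj_image_subspace_eq[OF assms] .
  define \<Phi> where "\<Phi> = (\<lambda>M::'a^'k^'n. \<chi> i. g (M $ i))"
  have rows_\<Phi>: "rows (\<Phi> M) = g ` rows M" for M
    by (auto simp: rows_eq_range \<Phi>_def)
  show ?thesis
  proof (rule card_inj_on_le)
    show "inj_on \<Phi> {M. vec.span (rows M) = U}"
    proof (rule inj_onI)
      fix M M' assume "\<Phi> M = \<Phi> M'"
      then have "g (M $ i) = g (M' $ i)" for i by (metis \<Phi>_def vec_lambda_beta)
      then have "M $ i = M' $ i" for i using \<open>inj g\<close> by (meson injD)
      then show "M = M'" by (simp add: vec_eq_iff)
    qed
    show "\<Phi> ` {M. vec.span (rows M) = U} \<subseteq> {M. vec.span (rows M) = U'}"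
      using g vec.linear_span_image[OF g(1)] by (auto simp: rows_\<Phi>)
  qed simp
qed

lemma card_matrices_row_space_eq:
  fixes U U' :: "('a::{field,finite}^'k) set"
  assumes "vec.subspace U" "vec.subspace U'" "vec.dim U = vec.dim U'"
  shows "card {M::'a^'k^'n. vec.span (rows M) = U} = card {M::'a^'k^'n. vec.span (rows M) = U'}"
  using card_matrices_row_space_le[OF assms] card_matrices_row_space_le[OF assms(2,1) assms(3)[symmetric]]
  by (rule le_antisym)

lemma ex_matrix_row_space:
  fixes U :: "('a::{field,finite}^'k) set"
  assumes U: "vec.subspace U" and "vec.dim U \<le> CARD('n)"
  obtains M :: "'a^'k^'n" where "vec.span (rows M) = U"
proof -
  obtain B where B: "B \<subseteq> U" "vec.independent B" "U \<subseteq> vec.span B" "card B = vec.dim U"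
    using vec.basis_exists by blast
  have "finite B" using B vec.independent_explicit by blast
  obtain I :: "'n set" where "card I = card B"
    using assms(2) B(4) by (metis obtain_subset_with_card_n)
  then obtain h where h: "bij_betw h I B" using \<open>finite B\<close> by (metis finite finite_same_card_bij)
  define M :: "'a^'k^'n" where "M = (\<chi> i. if i \<in> I then h i else 0)"
  have "rows M \<subseteq> insert 0 B" "B \<subseteq> rows M"
    using h by (auto simp: rows_eq_range M_def bij_betw_def image_iff)
  then have "vec.span (rows M) = vec.span B"
    by (metis subset_antisym vec.span_insert_0 vec.span_mono)
  also have "\<dots> = U" using B U vec.span_minimal by blast
  finally show ?thesis by (rule that)
qed

lemma measure_cond_uniform_const_fibres:
  fixes \<rho> :: "'m::finite \<Rightarrow> 'u"
  assumes "finite F" "F \<noteq> {}" "c > 0" and fibres: "\<And>U. U \<in> F \<Longrightarrow> card {M. \<rho> M = U} = c"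
  shows "measure_pmf.prob (cond_pmf (pmf_of_set UNIV) {M. \<rho> M \<in> F}) {M. P (\<rho> M)}
         = real (card {U\<in>F. P U}) / real (card F)"
proof -
  have count: "card {M. \<rho> M \<in> A} = card A * c" if "A \<subseteq> F" for A
  proof (rule card_eq_card_mult_const_fibres[where f = \<rho>])
    fix U assume "U \<in> A"
    then have "{M \<in> {M. \<rho> M \<in> A}. \<rho> M = U} = {M. \<rho> M = U}" by auto
    then show "card {M \<in> {M. \<rho> M \<in> A}. \<rho> M = U} = c" using fibres that \<open>U \<in> A\<close> by auto
  qed (use that finite_subset[OF that \<open>finite F\<close>] in auto)
  then have "{M. \<rho> M \<in> F} \<noteq> {}" using assms(1-3) by fastforce
  then have "cond_pmf (pmf_of_set UNIV) {M. \<rho> M \<in> F} = pmf_of_set {M. \<rho> M \<in> F}"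
    by (intro pmf_eqI) (simp add: pmf_cond measure_pmf_of_set indicator_def)
  moreover have "{M. \<rho> M \<in> F} \<inter> {M. P (\<rho> M)} = {M. \<rho> M \<in> {U\<in>F. P U}}" by auto
  ultimately show ?thesis
    using \<open>{M. \<rho> M \<in> F} \<noteq> {}\<close> \<open>c > 0\<close> count[of F] count[of "{U\<in>F. P U}"]
    by (simp add: measure_pmf_of_set)
qed

lemma card_matrices_row_space_pos:
  fixes U :: "('a::{field,finite}^'k) set"
  assumes "vec.subspace U" "vec.dim U \<le> CARD('n::finite)"
  shows "card {M::'a^'k^'n. vec.span (rows M) = U} > 0"
proof -
  obtain M :: "'a^'k^'n" where "vec.span (rows M) = U"
    using assms by (rule ex_matrix_row_space)
  then show ?thesis by (auto simp: card_gt_0_iff)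
qed

theorem theorem1:
  fixes x r :: nat
  assumes "x \<le> r" and "r \<le> min CARD('n::finite) CARD('k::finite)"
  shows "measure_pmf.prob
           (cond_pmf (pmf_of_set (UNIV :: ('a::{finite,field}^'k^'n) set)) {M. rank M = r})
           {M. card {i. axis i 1 \<in> vec.span (rows M)} = x}
         = real (CARD('k) choose x) / gauss_binom CARD('a) (int CARD('k)) (int r)
           * (\<Sum>j = 0..CARD('k) - x. (-1) ^ j * real ((CARD('k) - x) choose j)
                * gauss_binom CARD('a) (int CARD('k) - int x - int j) (int r - int x - int j))"
proof -
  have "r \<le> CARD('k)" "r \<le> CARD('n)" using assms(2) by auto
  define F where "F = {U :: ('a^'k) set. vec.subspace U \<and> vec.dim U = r}"
  define G where "G t = gauss_binom CARD('a) (int CARD('k) - int t) (int r - int t)" for t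
  obtain U\<^sub>0 :: "('a^'k) set" where U\<^sub>0: "vec.subspace U\<^sub>0" "vec.dim U\<^sub>0 = r"
    by (rule ex_subspace_dim[OF \<open>r \<le> CARD('k)\<close>])
  then have "F \<noteq> {}" unfolding F_def by blast
  define c where "c = card {M::'a^'k^'n. vec.span (rows M) = U\<^sub>0}"
  have "c > 0"
    unfolding c_def using U\<^sub>0 \<open>r \<le> CARD('n)\<close> by (intro card_matrices_row_space_pos) simp_all
  have fibres: "card {M::'a^'k^'n. vec.span (rows M) = U} = c" if "U \<in> F" for U
    unfolding c_def using that U\<^sub>0 by (intro card_matrices_row_space_eq) (simp_all add: F_def)
  have rank: "{M::'a^'k^'n. rank M = r} = {M. vec.span (rows M) \<in> F}"
    by (simp add: F_def row_rank_def_gen)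
  have prob: "measure_pmf.prob (cond_pmf (pmf_of_set UNIV) {M::'a^'k^'n. vec.span (rows M) \<in> F})
        {M. card {i. axis i 1 \<in> vec.span (rows M)} = x}
      = real (card {U\<in>F. card {i. axis i 1 \<in> U} = x}) / real (card F)"
    by (rule measure_cond_uniform_const_fibres[OF _ \<open>F \<noteq> {}\<close> \<open>c > 0\<close> fibres]) simp
  have subsets: "real (card {U\<in>F. T \<subseteq> {i. axis i 1 \<in> U}}) = G (card T)" for T
    using card_subspaces_containing_axes[OF \<open>r \<le> CARD('k)\<close>, of T]
    by (simp add: F_def G_def conj_assoc)
  have total: "real (card F) = gauss_binom CARD('a) (int CARD('k)) (int r)"
    using subsets[of "{}"] by (simp add: G_def)
  have count: "real (card {U\<in>F. card {i. axis i 1 \<in> U} = x}) = real (CARD('k) choose x)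
      * (\<Sum>j=0..CARD('k)-x. (-1)^j * real ((CARD('k)-x) choose j) * G (x+j))"
    by (rule card_by_inclusion_exclusion[OF _ subsets]) simp
  show ?thesis
    unfolding rank prob count total by (simp add: G_def algebra_simps)
qed

end
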